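(* For $n\ge1$, $\lambda_n'(a)=\sum_{k=1}^{n-1}k\,\lambda_{n-k}(a)\lambda_k(a)$; moreover $\lambda_n(0)=(-1)^{n-1}/n$ and $\lambda_1(a)=1$.
   Context: Let $L(a,t)=\sum_{n\ge1}\lambda_n(a)t^n\in\mathbb Q[a][[t]]$ be the compositional inverse (in $t$) of $e^{-at}(e^t-1)$, equivalently the unique such series with $e^{L(a,t)}(1-te^{(a-1)L(a,t)})=1$. $\lambda_n'$ denotes the derivative in $a$. *)

theory Defs
  imports Complex_Main "HOL-Computational_Algebra.Formal_Power_Series"
begin

definition gen_series :: "real \<Rightarrow> real fps" where
  "gen_series a = fps_exp (- a) * (fps_exp 1 - 1)"

definition lam :: "real \<Rightarrow> nat \<Rightarrow> real" where
  "lam a n = fps_nth (fps_inv (gen_series a)) n"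

end

theory Submission
  imports Defs
begin

text \<open>
  Differentiate the identity \<open>G(b, L(b, t)) = t\<close> in the parameter \<open>b\<close>, coefficient by
  coefficient. The chain rule for formal composition gives
  \<open>\<partial>\<^sub>bG \<circ> L + (\<partial>\<^sub>tG \<circ> L) \<partial>\<^sub>bL = 0\<close>, and \<open>(\<partial>\<^sub>tG \<circ> L) \<partial>\<^sub>tL = 1\<close>, so
  \<open>\<partial>\<^sub>bL = - \<partial>\<^sub>tL \<cdot> (\<partial>\<^sub>bG \<circ> L)\<close>. For \<open>G = e\<^sup>-\<^sup>b\<^sup>t(e\<^sup>t - 1)\<close> one has \<open>\<partial>\<^sub>bG = -tG\<close>,
  hence \<open>\<partial>\<^sub>bL = t L \<partial>\<^sub>tL\<close>, whose \<open>n\<close>-th coefficient is the stated convolution.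
  At \<open>b = 0\<close>, \<open>L\<close> is the inverse of \<open>e\<^sup>t - 1\<close>, i.e. \<open>log (1 + t)\<close>.
\<close>

unbundle fps_syntax

definition has_coeffwise_derivative ::
    "(real \<Rightarrow> real fps) \<Rightarrow> real fps \<Rightarrow> real \<Rightarrow> bool" where
  "has_coeffwise_derivative F D a \<longleftrightarrow>
     (\<forall>n. ((\<lambda>b. F b $ n) has_real_derivative D $ n) (at a))"

lemma has_coeffwise_derivative_const: "has_coeffwise_derivative (\<lambda>b. C) 0 a"
  unfolding has_coeffwise_derivative_def by simp

lemma has_coeffwise_derivative_unique:
  "has_coeffwise_derivative F D a \<Longrightarrow> has_coeffwise_derivative F D' a \<Longrightarrow> D = D'"
  unfolding has_coeffwise_derivative_def by (intro fps_ext) (blast intro: DERIV_unique)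

lemma has_coeffwise_derivative_exists:
  assumes "\<And>n. (\<lambda>b. F b $ n) differentiable (at a)"
  obtains D where "has_coeffwise_derivative F D a"
proof -
  from assms obtain d where "\<And>n. ((\<lambda>b. F b $ n) has_real_derivative d n) (at a)"
    unfolding real_differentiable_def by metis
  then have "has_coeffwise_derivative F (Abs_fps d) a"
    by (simp add: has_coeffwise_derivative_def)
  then show thesis by (rule that)
qed

lemma has_coeffwise_derivative_mult:
  assumes F: "has_coeffwise_derivative F Fd a" and H: "has_coeffwise_derivative H Hd a"
  shows "has_coeffwise_derivative (\<lambda>b. F b * H b) (Fd * H a + F a * Hd) a"
  unfolding has_coeffwise_derivative_def
proof
  fix n
  have "(Fd * H a + F a * Hd) $ n = (\<Sum>i=0..n. F a $ i * Hd $ (n - i) + Fd $ i * H a $ (n - i))"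
    by (simp add: fps_mult_nth sum.distrib add.commute)
  then show "((\<lambda>b. (F b * H b) $ n) has_real_derivative (Fd * H a + F a * Hd) $ n) (at a)"
    using F H unfolding has_coeffwise_derivative_def fps_mult_nth
    by (auto intro!: DERIV_sum DERIV_mult')
qed

lemma has_coeffwise_derivative_power:
  assumes F: "has_coeffwise_derivative F Fd a"
  shows "has_coeffwise_derivative (\<lambda>b. F b ^ k) (of_nat k * F a ^ (k - 1) * Fd) a"
proof (induction k)
  case 0
  show ?case using has_coeffwise_derivative_const[of 1 a] by simp
next
  case (Suc k)
  have "has_coeffwise_derivative (\<lambda>b. F b * F b ^ k) (Fd * F a ^ k + F a * (of_nat k * F a ^ (k - 1) * Fd)) a"
    by (rule has_coeffwise_derivative_mult[OF F Suc.IH])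
  moreover have "Fd * F a ^ k + F a * (of_nat k * F a ^ (k - 1) * Fd) = of_nat (Suc k) * F a ^ k * Fd"
    by (cases k) (simp_all add: algebra_simps)
  ultimately show ?case by simp
qed

lemma has_coeffwise_derivative_exp:
  "has_coeffwise_derivative (\<lambda>b. fps_exp (c * b)) (fps_const c * fps_X * fps_exp (c * a)) a"
  unfolding has_coeffwise_derivative_def
proof
  fix n
  show "((\<lambda>b. fps_exp (c * b) $ n) has_real_derivative (fps_const c * fps_X * fps_exp (c * a)) $ n) (at a)"
  proof (cases n)
    case (Suc m)
    have "((\<lambda>b. (c * b) ^ Suc m / fact (Suc m)) has_real_derivative
            of_nat (Suc m) * (c * (c * a) ^ m) / fact (Suc m)) (at a)"
      using DERIV_power[OF DERIV_cmult_Id[of c a], of "Suc m"] by (intro DERIV_cdivide) simp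
    moreover have "of_nat (Suc m) * (c * (c * a) ^ m) / fact (Suc m) = c * ((c * a) ^ m / fact m)"
      by (simp add: fact_Suc field_simps del: of_nat_Suc)
    moreover have "(fps_const c * fps_X * fps_exp (c * a)) $ Suc m = c * ((c * a) ^ m / fact m)"
      by (simp add: mult.assoc)
    ultimately show ?thesis
      using Suc by (simp only: fps_exp_nth of_nat_fact)
  qed simp
qed

text \<open>The left side is the \<open>n\<close>-th coefficient of \<open>\<Sum>\<^sub>i G\<^sub>i \<partial>(L\<^sup>i)\<close>: this is the chain rule
  for \<open>G \<circ> L\<close> when only \<open>L\<close> varies.\<close>

lemma fps_compose_deriv_nth:
  fixes G L Ld :: "'a::comm_ring_1 fps"
  assumes L0: "L $ 0 = 0" and Ld0: "Ld $ 0 = 0"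
  shows "(\<Sum>i=0..n. G $ i * (of_nat i * L ^ (i - 1) * Ld) $ n) = ((fps_deriv G oo L) * Ld) $ n"
proof -
  have top: "(L ^ n * Ld) $ n = 0"
    using startsby_zero_power_prefix[OF L0, of n] Ld0
    by (auto simp: fps_mult_nth le_less intro!: sum.neutral)
  have "(\<Sum>i=0..n. G $ i * (of_nat i * L ^ (i - 1) * Ld) $ n)
      = (\<Sum>i=0..Suc n. G $ i * (of_nat i * L ^ (i - 1) * Ld) $ n)"
    using top by (simp add: mult.assoc fps_of_nat[symmetric])
  also have "\<dots> = (\<Sum>i=0..n. fps_deriv G $ i * (L ^ i * Ld) $ n)"
    by (subst sum.atLeast0_atMost_Suc_shift) (simp add: mult.assoc mult.left_commute fps_of_nat[symmetric])
  also have "\<dots> = (\<Sum>j=0..n. \<Sum>i=0..n. fps_deriv G $ i * (L ^ i) $ j * Ld $ (n - j))"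
    by (subst sum.swap) (simp add: fps_mult_nth sum_distrib_left mult.assoc)
  also have "\<dots> = (\<Sum>j=0..n. (\<Sum>i=0..j. fps_deriv G $ i * (L ^ i) $ j) * Ld $ (n - j))"
  proof (intro sum.cong refl)
    fix j assume "j \<in> {0..n}"
    then have "(\<Sum>i=0..n. fps_deriv G $ i * (L ^ i) $ j * Ld $ (n - j))
             = (\<Sum>i=0..j. fps_deriv G $ i * (L ^ i) $ j * Ld $ (n - j))"
      using startsby_zero_power_prefix[OF L0] by (intro sum.mono_neutral_right) auto
    then show "(\<Sum>i=0..n. fps_deriv G $ i * (L ^ i) $ j * Ld $ (n - j))
             = (\<Sum>i=0..j. fps_deriv G $ i * (L ^ i) $ j) * Ld $ (n - j)"
      by (simp add: sum_distrib_right)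
  qed
  also have "\<dots> = ((fps_deriv G oo L) * Ld) $ n"
    by (simp add: fps_mult_nth fps_compose_nth)
  finally show ?thesis .
qed

lemma has_coeffwise_derivative_compose:
  assumes L0: "\<And>b. L b $ 0 = 0"
    and G: "has_coeffwise_derivative G Gd a" and L: "has_coeffwise_derivative L Ld a"
  shows "has_coeffwise_derivative (\<lambda>b. G b oo L b) ((Gd oo L a) + (fps_deriv (G a) oo L a) * Ld) a"
  unfolding has_coeffwise_derivative_def
proof
  fix n
  have Ln: "((\<lambda>b. L b $ k) has_real_derivative Ld $ k) (at a)"
    and Gn: "((\<lambda>b. G b $ k) has_real_derivative Gd $ k) (at a)" for k
    using G L unfolding has_coeffwise_derivative_def by blast+
  have Ld0: "Ld $ 0 = 0"
    using Ln[of 0] DERIV_unique[OF _ DERIV_const] by (simp add: L0)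
  have power: "((\<lambda>b. (L b ^ i) $ n) has_real_derivative (of_nat i * L a ^ (i - 1) * Ld) $ n) (at a)" for i
    using has_coeffwise_derivative_power[OF L, of i] unfolding has_coeffwise_derivative_def by blast
  have "((Gd oo L a) + (fps_deriv (G a) oo L a) * Ld) $ n
      = (\<Sum>i=0..n. G a $ i * (of_nat i * L a ^ (i - 1) * Ld) $ n + Gd $ i * (L a ^ i) $ n)"
    using fps_compose_deriv_nth[OF L0[of a] Ld0, of "G a" n]
    by (simp add: sum.distrib fps_compose_nth add.commute)
  then show "((\<lambda>b. (G b oo L b) $ n) has_real_derivative
               ((Gd oo L a) + (fps_deriv (G a) oo L a) * Ld) $ n) (at a)"
    unfolding fps_compose_nth using Gn power by (auto intro!: DERIV_sum DERIV_mult')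
qed

lemma fps_inv_nth_differentiable:
  assumes G: "has_coeffwise_derivative G Gd a" and G1: "G a $ 1 \<noteq> 0"
  shows "(\<lambda>b. fps_inv (G b) $ n) differentiable (at a)"
proof (induction n rule: less_induct)
  case (less n)
  have coeff: "(\<lambda>b. (G b ^ i) $ k) differentiable (at a)" for i k
    using has_coeffwise_derivative_power[OF G, of i]
    unfolding has_coeffwise_derivative_def real_differentiable_def by blast
  have "(\<lambda>b. G b $ 1) differentiable (at a)"
    using coeff[of 1 1] by simp
  show ?case
  proof (cases n)
    case (Suc m)
    have "fps_inv (G b) $ Suc m = (fps_X $ Suc m - (\<Sum>i=0..m. fps_inv (G b) $ i * (G b ^ i) $ Suc m))
                                 / (G b $ 1) ^ Suc m" for b
      by (simp add: fps_inv_def del: power_Suc)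
    moreover have "(\<lambda>b. (fps_X $ Suc m - (\<Sum>i=0..m. fps_inv (G b) $ i * (G b ^ i) $ Suc m))
                         / (G b $ 1) ^ Suc m) differentiable (at a)"
      using G1 \<open>(\<lambda>b. G b $ 1) differentiable (at a)\<close>
      by (auto simp: Suc intro!: derivative_intros less.IH coeff)
    ultimately show ?thesis
      using Suc by simp
  qed (simp add: fps_inv_def)
qed

lemma has_coeffwise_derivative_fps_inv:
  assumes G0: "\<And>b. G b $ 0 = 0" and G1: "\<And>b. G b $ 1 \<noteq> 0"
    and G: "has_coeffwise_derivative G Gd a"
  shows "has_coeffwise_derivative (\<lambda>b. fps_inv (G b))
           (- fps_deriv (fps_inv (G a)) * (Gd oo fps_inv (G a))) a"
proof -
  define L where "L = fps_inv (G a)"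
  obtain Ld where Ld: "has_coeffwise_derivative (\<lambda>b. fps_inv (G b)) Ld a"
    using has_coeffwise_derivative_exists fps_inv_nth_differentiable[OF G G1] by metis
  have L0: "fps_inv (G b) $ 0 = 0" for b
    by (simp add: fps_inv_def)
  have GL: "G b oo fps_inv (G b) = fps_X" for b
    using G0 G1 by (rule fps_inv_right)
  have "has_coeffwise_derivative (\<lambda>b. G b oo fps_inv (G b)) ((Gd oo L) + (fps_deriv (G a) oo L) * Ld) a"
    unfolding L_def by (rule has_coeffwise_derivative_compose[OF L0 G Ld])
  then have chain: "(fps_deriv (G a) oo L) * Ld = - (Gd oo L)"
    using has_coeffwise_derivative_unique has_coeffwise_derivative_const
    by (simp add: GL eq_neg_iff_add_eq_0 add.commute)
  have "(fps_deriv (G a) oo L) * fps_deriv L = 1"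
    using fps_compose_deriv[OF L0[of a], of "G a"] by (simp add: L_def GL)
  then have "Ld = fps_deriv L * ((fps_deriv (G a) oo L) * Ld)"
    by (metis mult.assoc mult.commute mult_1)
  with chain Ld show ?thesis
    by (simp add: L_def)
qed

lemma gen_series_nth_0: "gen_series b $ 0 = 0"
  by (simp add: gen_series_def)

lemma gen_series_nth_1: "gen_series b $ 1 = 1"
  by (simp add: gen_series_def fps_mult_nth)

lemma has_coeffwise_derivative_gen_series:
  "has_coeffwise_derivative gen_series (- (fps_X * gen_series a)) a"
proof -
  have "has_coeffwise_derivative (\<lambda>b. fps_exp (-1 * b) * (fps_exp 1 - 1))
          (fps_const (-1) * fps_X * fps_exp (-1 * a) * (fps_exp 1 - 1) + fps_exp (-1 * a) * 0) a"
    by (rule has_coeffwise_derivative_mult[OF has_coeffwise_derivative_exp has_coeffwise_derivative_const])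
  then show ?thesis
    by (simp add: gen_series_def[abs_def] mult.assoc flip: fps_const_neg)
qed

lemma has_coeffwise_derivative_fps_inv_gen_series:
  "has_coeffwise_derivative (\<lambda>b. fps_inv (gen_series b))
     (fps_X * fps_inv (gen_series a) * fps_deriv (fps_inv (gen_series a))) a"
proof -
  define L where "L = fps_inv (gen_series a)"
  have L0: "L $ 0 = 0"
    by (simp add: L_def fps_inv_def)
  have G1: "gen_series b $ 1 \<noteq> 0" for b
    by (simp only: gen_series_nth_1 one_neq_zero not_False_eq_True)
  have "gen_series a oo L = fps_X"
    unfolding L_def using gen_series_nth_0 G1 by (rule fps_inv_right)
  then have "(- (fps_X * gen_series a)) oo L = - (fps_X * L)"
    by (simp add: fps_compose_uminus fps_compose_mult_distrib[OF L0] fps_X_fps_compose_startby0[OF L0]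
        mult.commute)
  moreover have "has_coeffwise_derivative (\<lambda>b. fps_inv (gen_series b))
                   (- fps_deriv L * ((- (fps_X * gen_series a)) oo L)) a"
    unfolding L_def using gen_series_nth_0 G1 has_coeffwise_derivative_gen_series
    by (rule has_coeffwise_derivative_fps_inv)
  ultimately show ?thesis
    by (simp add: L_def mult_ac)
qed

lemma fps_X_mult_deriv_nth_Suc:
  fixes L :: "'a::comm_ring_1 fps"
  assumes "L $ 0 = 0"
  shows "(fps_X * L * fps_deriv L) $ Suc m = (\<Sum>k=1..m. of_nat k * L $ (Suc m - k) * L $ k)"
proof -
  have "(fps_X * L * fps_deriv L) $ Suc m = (L * fps_deriv L) $ m"
    by (simp add: mult.assoc)
  also have "\<dots> = (\<Sum>i=0..m. L $ i * (of_nat (m - i + 1) * L $ (m - i + 1)))"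
    unfolding fps_mult_nth fps_deriv_nth ..
  also have "\<dots> = (\<Sum>i=1..m. L $ i * (of_nat (m - i + 1) * L $ (m - i + 1)))"
    using assms by (simp add: sum.atLeast_Suc_atMost)
  also have "\<dots> = (\<Sum>k=1..m. of_nat k * L $ (Suc m - k) * L $ k)"
    by (subst sum.atLeastAtMost_rev) (auto simp: Suc_diff_le of_nat_diff intro!: sum.cong)
  finally show ?thesis .
qed

theorem lemma6p8:
  fixes n :: nat and a :: real
  assumes "n \<ge> 1"
  shows "((\<lambda>b. lam b n) has_real_derivative
            (\<Sum>k=1..n-1. real k * lam a (n - k) * lam a k)) (at a)
         \<and> lam 0 n = (-1) ^ (n - 1) / real n
         \<and> lam a 1 = 1"
proof (intro conjI)
  obtain m where n: "n = Suc m"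
    using assms by (cases n) auto
  define L where "L = fps_inv (gen_series a)"
  have "((\<lambda>b. lam b n) has_real_derivative (fps_X * L * fps_deriv L) $ n) (at a)"
    using has_coeffwise_derivative_fps_inv_gen_series[of a]
    unfolding has_coeffwise_derivative_def lam_def L_def by blast
  moreover have "(fps_X * L * fps_deriv L) $ n = (\<Sum>k=1..n-1. real k * lam a (n - k) * lam a k)"
    using fps_X_mult_deriv_nth_Suc[of L m] by (simp add: n L_def lam_def fps_inv_def)
  ultimately show "((\<lambda>b. lam b n) has_real_derivative
            (\<Sum>k=1..n-1. real k * lam a (n - k) * lam a k)) (at a)"
    by simp
  show "lam 0 n = (-1) ^ (n - 1) / real n"
    using assms by (simp add: lam_def gen_series_def fps_ln_nth flip: fps_ln_fps_exp_inv)
  show "lam a 1 = 1"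
    using gen_series_nth_1[of a] by (simp add: lam_def fps_inv_def)
qed

end
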